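(* Let $G$ be a group generated by an arbitrary set of elements $S$, and let $T$ be a simplicial tree on which $G$ acts acylindrically by isometries. Suppose that for all distinct pairs $s_i,s_j\in S$, the elements $s_i$, $s_j$ and $s_is_j$ act elliptically on $T$. Then $G$ acts elliptically on $T$.
   Context: Groups are countable; actions on trees are simplicial without inversion. An action on a metric space $(X,d)$ is acylindrical if for every $\epsilon\ge0$ there are $R(\epsilon),N(\epsilon)\ge0$ such that for all $x,y$ with $d(x,y)\ge R(\epsilon)$, at most $N(\epsilon)$ elements $g$ satisfy $d(x,gx)\le\epsilon$ and $d(y,gy)\le\epsilon$. A subgroup acts elliptically on $T$ if it fixes a point of $T$ (equivalently has bounded orbits); an element acts elliptically if the cyclic subgroup it generates does. *)

theory Defs
  imports Complex_Main "HOL-Algebra.Group_Action" "HOL-Algebra.Generated_Groups" "HOL-Library.Countable_Set"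
begin

definition walk :: "'v set \<Rightarrow> ('v \<Rightarrow> 'v \<Rightarrow> bool) \<Rightarrow> 'v list \<Rightarrow> bool" where
  "walk V E xs \<longleftrightarrow> xs \<noteq> [] \<and> set xs \<subseteq> V \<and>
     (\<forall>i. Suc i < length xs \<longrightarrow> E (xs ! i) (xs ! Suc i))"

definition walk_between :: "'v set \<Rightarrow> ('v \<Rightarrow> 'v \<Rightarrow> bool) \<Rightarrow> 'v \<Rightarrow> 'v \<Rightarrow> 'v list \<Rightarrow> bool" where
  "walk_between V E x y xs \<longleftrightarrow> walk V E xs \<and> hd xs = x \<and> last xs = y"

definition simplicial_tree :: "'v set \<Rightarrow> ('v \<Rightarrow> 'v \<Rightarrow> bool) \<Rightarrow> bool" where
  "simplicial_tree V E \<longleftrightarrow>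
     V \<noteq> {} \<and>
     (\<forall>x y. E x y \<longrightarrow> x \<in> V \<and> y \<in> V) \<and>
     (\<forall>x y. E x y \<longrightarrow> E y x) \<and>
     (\<forall>x. \<not> E x x) \<and>
     (\<forall>x\<in>V. \<forall>y\<in>V. \<exists>!p. walk_between V E x y p \<and> distinct p)"

definition tree_dist :: "'v set \<Rightarrow> ('v \<Rightarrow> 'v \<Rightarrow> bool) \<Rightarrow> 'v \<Rightarrow> 'v \<Rightarrow> real" where
  "tree_dist V E x y = real (LEAST n. \<exists>p. walk_between V E x y p \<and> length p = Suc n)"

definition tree_action ::
  "('g, 'b) monoid_scheme \<Rightarrow> 'v set \<Rightarrow> ('v \<Rightarrow> 'v \<Rightarrow> bool) \<Rightarrow> ('g \<Rightarrow> 'v \<Rightarrow> 'v) \<Rightarrow> bool" where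
  "tree_action G V E \<phi> \<longleftrightarrow>
     group G \<and> simplicial_tree V E \<and> group_action G V \<phi> \<and>
     (\<forall>g\<in>carrier G. \<forall>x\<in>V. \<forall>y\<in>V. E (\<phi> g x) (\<phi> g y) \<longleftrightarrow> E x y) \<and>
     (\<forall>g\<in>carrier G. \<forall>x y. E x y \<longrightarrow> \<not> (\<phi> g x = y \<and> \<phi> g y = x))"

definition acylindrical_action ::
  "('g, 'b) monoid_scheme \<Rightarrow> 'v set \<Rightarrow> ('v \<Rightarrow> 'v \<Rightarrow> real) \<Rightarrow> ('g \<Rightarrow> 'v \<Rightarrow> 'v) \<Rightarrow> bool" where
  "acylindrical_action G X d \<phi> \<longleftrightarrow>
     (\<forall>\<epsilon>::real. \<epsilon> \<ge> 0 \<longrightarrow> (\<exists>R::real. \<exists>N::nat. R \<ge> 0 \<and>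
        (\<forall>x\<in>X. \<forall>y\<in>X. d x y \<ge> R \<longrightarrow>
           finite {g \<in> carrier G. d x (\<phi> g x) \<le> \<epsilon> \<and> d y (\<phi> g y) \<le> \<epsilon>} \<and>
           card {g \<in> carrier G. d x (\<phi> g x) \<le> \<epsilon> \<and> d y (\<phi> g y) \<le> \<epsilon>} \<le> N)))"

definition elliptic_subgroup :: "'v set \<Rightarrow> ('g \<Rightarrow> 'v \<Rightarrow> 'v) \<Rightarrow> 'g set \<Rightarrow> bool" where
  "elliptic_subgroup V \<phi> H \<longleftrightarrow> (\<exists>v\<in>V. \<forall>h\<in>H. \<phi> h v = v)"

definition elliptic_element ::
  "('g, 'b) monoid_scheme \<Rightarrow> 'v set \<Rightarrow> ('g \<Rightarrow> 'v \<Rightarrow> 'v) \<Rightarrow> 'g \<Rightarrow> bool" where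
  "elliptic_element G V \<phi> g \<longleftrightarrow> elliptic_subgroup V \<phi> (generate G {g})"

end

theory Submission
  imports Defs
begin

(* By Serre's lemma, if s, t and s t are elliptic then s and t have a common fixed point, so the
   fixed-point sets Fix(s), s \<in> S, which are subtrees, meet pairwise. By the Helly property of
   subtrees every finite subfamily has a common point, which settles the case of finite S.
   For infinite S, acylindricity (with \<epsilon> = 0) bounds the diameter of Fix(F) for any N + 1
   generators F. Fix a vertex x\<^sub>0 of Fix(F). As F' ranges over the finite sets of generators
   containing F, the distance from x\<^sub>0 to Fix(F') is bounded, hence maximal for some F'. The
   point of Fix(F') nearest to x\<^sub>0 is unique, and maximality makes it also the nearest point of
   Fix(F' \<union> {s}) for every generator s; so it is fixed by S, hence by G. *)

section \<open>Geodesics in simplicial trees\<close>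

lemma walk_iff_successively:
  "walk V E xs \<longleftrightarrow> xs \<noteq> [] \<and> set xs \<subseteq> V \<and> successively E xs"
  unfolding walk_def successively_conv_nth by blast

lemma common_prefix_split:
  "\<exists>q r s. xs = q @ r \<and> ys = q @ s \<and> (r = [] \<or> s = [] \<or> hd r \<noteq> hd s)"
proof (induction xs arbitrary: ys)
  case Nil
  then show ?case by auto
next
  case (Cons a xs)
  show ?case
  proof (cases ys)
    case (Cons b ys')
    show ?thesis
    proof (cases "a = b")
      case True
      obtain q r s where "xs = q @ r" "ys' = q @ s" "r = [] \<or> s = [] \<or> hd r \<noteq> hd s"
        using Cons.IH by blast
      then show ?thesis
        using Cons True by (intro exI[of _ "a # q"] exI[of _ r] exI[of _ s]) auto
    qed (use Cons in \<open>intro exI[of _ "[]"] exI[of _ "a # xs"] exI[of _ ys]; simp\<close>)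
  qed (intro exI[of _ "[]"] exI[of _ "a # xs"] exI[of _ ys]; simp)
qed

locale tree_graph =
  fixes V :: "'v set" and E :: "'v \<Rightarrow> 'v \<Rightarrow> bool"
  assumes simplicial_tree: "simplicial_tree V E"
begin

lemma adjacent_sym: "E x y \<Longrightarrow> E y x"
  using simplicial_tree unfolding simplicial_tree_def by blast

lemma V_nonempty: "V \<noteq> {}"
  using simplicial_tree unfolding simplicial_tree_def by blast

definition is_path :: "'v \<Rightarrow> 'v \<Rightarrow> 'v list \<Rightarrow> bool" where
  "is_path x y p \<longleftrightarrow>
     p \<noteq> [] \<and> set p \<subseteq> V \<and> successively E p \<and> hd p = x \<and> last p = y \<and> distinct p"

lemma is_path_iff: "is_path x y p \<longleftrightarrow> walk_between V E x y p \<and> distinct p"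
  unfolding is_path_def walk_between_def walk_iff_successively by blast

lemma ex1_path: "x \<in> V \<Longrightarrow> y \<in> V \<Longrightarrow> \<exists>!p. is_path x y p"
  using simplicial_tree unfolding simplicial_tree_def is_path_iff by blast

definition geodesic :: "'v \<Rightarrow> 'v \<Rightarrow> 'v list" where
  "geodesic x y = (THE p. is_path x y p)"

lemma is_path_geodesic: "x \<in> V \<Longrightarrow> y \<in> V \<Longrightarrow> is_path x y (geodesic x y)"
  unfolding geodesic_def using ex1_path by (rule theI')

lemma geodesic_eqI: "is_path x y p \<Longrightarrow> geodesic x y = p"
proof -
  assume p: "is_path x y p"
  then have "x \<in> V" "y \<in> V"
    unfolding is_path_def by (metis hd_in_set last_in_set subsetD)+
  then show ?thesis using p ex1_path is_path_geodesic by blast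
qed

lemma geodesic_refl: "x \<in> V \<Longrightarrow> geodesic x x = [x]"
  by (rule geodesic_eqI) (simp add: is_path_def)

lemma set_geodesic_subset: "x \<in> V \<Longrightarrow> y \<in> V \<Longrightarrow> set (geodesic x y) \<subseteq> V"
  using is_path_geodesic unfolding is_path_def by blast

lemma geodesic_rev:
  assumes "x \<in> V" "y \<in> V"
  shows "geodesic y x = rev (geodesic x y)"
proof (rule geodesic_eqI)
  show "is_path y x (rev (geodesic x y))"
    using is_path_geodesic[OF assms] unfolding is_path_def
    by (auto simp: hd_rev last_rev intro: successively_mono adjacent_sym)
qed

lemma is_path_prefix: "is_path x y (p @ q) \<Longrightarrow> p \<noteq> [] \<Longrightarrow> is_path x (last p) p"
  unfolding is_path_def by (auto simp: successively_append_iff)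

lemma is_path_suffix: "is_path x y (p @ q) \<Longrightarrow> q \<noteq> [] \<Longrightarrow> is_path (hd q) y q"
  unfolding is_path_def by (auto simp: successively_append_iff)

lemma is_path_join:
  assumes r: "is_path c x (c # r)" and s: "is_path c y (c # s)" and disj: "set r \<inter> set s = {}"
  shows "is_path x y (rev r @ c # s)"
proof -
  have "successively E (rev (c # r))"
    using r unfolding is_path_def successively_rev
    by (auto elim: successively_mono intro: adjacent_sym)
  then have "successively E (rev r @ c # s)"
    using s unfolding is_path_def
    by (auto simp: successively_append_iff successively_Cons split: if_splits)
  moreover have "hd (rev r @ c # s) = x" "last (rev r @ c # s) = y"
    using r s unfolding is_path_def
    by (cases r rule: rev_cases; cases s rule: rev_cases; auto)+
  ultimately show ?thesis
    using r s disj unfolding is_path_def by auto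
qed

lemma geodesic_tripod:
  assumes V: "p \<in> V" "x \<in> V" "y \<in> V"
  obtains q r s where "geodesic p x = q @ r" "geodesic p y = q @ s" "q \<noteq> []"
    "geodesic x y = rev r @ last q # s"
proof -
  obtain q r s where px: "geodesic p x = q @ r" and py: "geodesic p y = q @ s"
    and diverge: "r = [] \<or> s = [] \<or> hd r \<noteq> hd s"
    using common_prefix_split by blast
  have path_x: "is_path p x (q @ r)" and path_y: "is_path p y (q @ s)"
    using is_path_geodesic V px py by metis+
  have "q \<noteq> []"
    using path_x path_y diverge unfolding is_path_def by auto
  then obtain q' c where q: "q = q' @ [c]"
    by (metis append_butlast_last_id)
  have r: "is_path c x (c # r)" and s: "is_path c y (c # s)"
    using is_path_suffix[of p x q' "c # r"] is_path_suffix[of p y q' "c # s"] path_x path_y q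
    by auto
  have "set r \<inter> set s = {}"
  proof (rule ccontr)
    assume "set r \<inter> set s \<noteq> {}"
    then obtain z r1 r2 s1 s2 where r_split: "r = r1 @ z # r2" and s_split: "s = s1 @ z # s2"
      by (metis disjoint_iff split_list)
    have "is_path c z (c # r1 @ [z])" "is_path c z (c # s1 @ [z])"
      using is_path_prefix[of c x "c # r1 @ [z]" r2] is_path_prefix[of c y "c # s1 @ [z]" s2]
        r s r_split s_split by auto
    then have "c # r1 @ [z] = c # s1 @ [z]"
      using geodesic_eqI by metis
    then have "r1 = s1" by simp
    then show False
      using diverge r_split s_split by (cases r1) auto
  qed
  then have "geodesic x y = rev r @ c # s"
    by (intro geodesic_eqI is_path_join[OF r s])
  then show thesis
    using that[of q r s] px py \<open>q \<noteq> []\<close> q by simp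
qed

lemma geodesic_median:
  assumes "a \<in> V" "b \<in> V" "c \<in> V"
  obtains m where "m \<in> set (geodesic a b)" "m \<in> set (geodesic a c)" "m \<in> set (geodesic b c)"
proof -
  obtain q r s where "geodesic a b = q @ r" "geodesic a c = q @ s" "q \<noteq> []"
    "geodesic b c = rev r @ last q # s"
    using geodesic_tripod[OF assms] .
  then show thesis using that[of "last q"] by simp
qed

definition vdist :: "'v \<Rightarrow> 'v \<Rightarrow> nat" where
  "vdist x y = length (geodesic x y) - 1"

lemma walk_shortens_to_path:
  "walk_between V E x y p \<Longrightarrow> \<exists>p'. is_path x y p' \<and> length p' \<le> length p"
proof (induction "length p" arbitrary: p rule: less_induct)
  case less
  show ?case
  proof (cases "distinct p")
    case True
    then show ?thesis using less.prems is_path_iff by blast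
  next
    case False
    then obtain a b c z where p: "p = a @ [z] @ b @ [z] @ c"
      using not_distinct_decomp by blast
    have "walk_between V E x y (a @ [z] @ c)"
      using less.prems unfolding p walk_between_def walk_iff_successively
      by (auto simp: successively_append_iff successively_Cons hd_append split: if_splits)
    moreover have "length (a @ [z] @ c) < length p"
      using p by simp
    ultimately show ?thesis
      using less.hyps by fastforce
  qed
qed

lemma tree_dist_eq_vdist:
  assumes "x \<in> V" "y \<in> V"
  shows "tree_dist V E x y = real (vdist x y)"
proof -
  have path: "is_path x y (geodesic x y)"
    using is_path_geodesic assms .
  have "(LEAST n. \<exists>p. walk_between V E x y p \<and> length p = Suc n) = vdist x y"
  proof (rule Least_equality)
    show "\<exists>p. walk_between V E x y p \<and> length p = Suc (vdist x y)"
      using path unfolding is_path_iff vdist_def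
      by (intro exI[of _ "geodesic x y"]) (auto simp: walk_between_def walk_def)
  next
    fix n
    assume "\<exists>p. walk_between V E x y p \<and> length p = Suc n"
    then obtain p where "is_path x y p" "length p \<le> Suc n"
      using walk_shortens_to_path by fastforce
    then show "vdist x y \<le> n"
      unfolding vdist_def using geodesic_eqI by fastforce
  qed
  then show ?thesis
    unfolding tree_dist_def by simp
qed

lemma vdist_refl: "x \<in> V \<Longrightarrow> vdist x x = 0"
  unfolding vdist_def by (simp add: geodesic_refl)

lemma vdist_along_geodesic:
  assumes "x \<in> V" "w \<in> V" "m \<in> set (geodesic x w)"
  shows "m = w \<or> vdist x m < vdist x w"
proof -
  obtain a b where split: "geodesic x w = a @ m # b"
    using assms(3) split_list by metis
  have path: "is_path x w (a @ m # b)"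
    using is_path_geodesic assms(1,2) split by metis
  then have "geodesic x m = a @ [m]"
    using is_path_prefix[of x w "a @ [m]" b] geodesic_eqI by simp
  moreover have "b = [] \<Longrightarrow> m = w"
    using path unfolding is_path_def by auto
  ultimately show ?thesis
    using split unfolding vdist_def by auto
qed

section \<open>Helly property of subtrees\<close>

definition subtree :: "'v set \<Rightarrow> bool" where
  "subtree C \<longleftrightarrow> C \<subseteq> V \<and> (\<forall>x\<in>C. \<forall>y\<in>C. set (geodesic x y) \<subseteq> C)"

lemma subtree_subset: "subtree C \<Longrightarrow> C \<subseteq> V"
  unfolding subtree_def by blast

lemma subtree_V: "subtree V"
  unfolding subtree_def using set_geodesic_subset by blast

lemma subtree_Int: "subtree A \<Longrightarrow> subtree B \<Longrightarrow> subtree (A \<inter> B)"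
  unfolding subtree_def by blast

lemma subtree_Inter: "\<forall>A\<in>\<C>. subtree A \<Longrightarrow> subtree (V \<inter> \<Inter>\<C>)"
  unfolding subtree_def using set_geodesic_subset by blast

lemma subtrees_meet_pairwise_imp_meet:
  assumes "subtree A" "subtree B" "subtree C" "A \<inter> B \<noteq> {}" "A \<inter> C \<noteq> {}" "B \<inter> C \<noteq> {}"
  shows "A \<inter> B \<inter> C \<noteq> {}"
proof -
  obtain a b c where "a \<in> B \<inter> C" "b \<in> A \<inter> C" "c \<in> A \<inter> B"
    using assms(4-6) by blast
  moreover from this have "a \<in> V" "b \<in> V" "c \<in> V"
    using assms(1-3) unfolding subtree_def by auto
  then obtain m where "m \<in> set (geodesic a b)" "m \<in> set (geodesic a c)" "m \<in> set (geodesic b c)"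
    by (rule geodesic_median)
  ultimately have "m \<in> A \<inter> B \<inter> C"
    using assms(1-3) unfolding subtree_def by blast
  then show ?thesis by blast
qed

text \<open>Generalised over B so that the induction can absorb one member at a time into B.\<close>

lemma subtree_meets_Inter:
  assumes "finite \<C>" "\<forall>A\<in>\<C>. subtree A" "\<forall>A\<in>\<C>. \<forall>A'\<in>\<C>. A \<inter> A' \<noteq> {}"
    and "subtree B" "B \<noteq> {}" "\<forall>A\<in>\<C>. B \<inter> A \<noteq> {}"
  shows "B \<inter> \<Inter>\<C> \<noteq> {}"
  using assms
proof (induction \<C> arbitrary: B rule: finite_induct)
  case empty
  then show ?case by simp
next
  case (insert A \<C>)
  note subtrees = insert.prems(1) and meet = insert.prems(2) and B = insert.prems(3-5)
  have "B \<inter> A \<inter> \<Inter>\<C> \<noteq> {}"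
  proof (rule insert.IH)
    show "\<forall>C\<in>\<C>. B \<inter> A \<inter> C \<noteq> {}"
    proof
      fix C assume "C \<in> \<C>"
      then show "B \<inter> A \<inter> C \<noteq> {}"
        using subtrees_meet_pairwise_imp_meet[of B A C] subtrees meet B by (simp add: Int_commute)
    qed
    show "subtree (B \<inter> A)"
      using subtree_Int B(1) subtrees by simp
    show "B \<inter> A \<noteq> {}"
      using B(3) by simp
  qed (use subtrees meet in simp_all)
  then show ?case by (simp add: Int_assoc)
qed

lemma helly_subtrees:
  assumes "finite \<C>" "\<forall>A\<in>\<C>. subtree A" "\<forall>A\<in>\<C>. \<forall>B\<in>\<C>. A \<inter> B \<noteq> {}"
  shows "V \<inter> \<Inter>\<C> \<noteq> {}"
proof (rule subtree_meets_Inter[OF assms subtree_V V_nonempty])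
  show "\<forall>A\<in>\<C>. V \<inter> A \<noteq> {}"
  proof
    fix A assume "A \<in> \<C>"
    then have "A \<subseteq> V" "A \<inter> A \<noteq> {}"
      using assms(2,3) subtree_subset by auto
    then show "V \<inter> A \<noteq> {}" by auto
  qed
qed

definition dist_to :: "'v \<Rightarrow> 'v set \<Rightarrow> nat" where
  "dist_to x C = (INF w \<in> C. vdist x w)"

lemma dist_to_attained: "C \<noteq> {} \<Longrightarrow> \<exists>w\<in>C. vdist x w = dist_to x C"
  unfolding dist_to_def by (metis (mono_tags, lifting) Inf_nat_def1 empty_is_image imageE)

lemma dist_to_le: "w \<in> C \<Longrightarrow> dist_to x C \<le> vdist x w"
  unfolding dist_to_def by (simp add: cINF_lower)

lemma nearest_point_unique:
  assumes C: "subtree C" and x: "x \<in> V" and w: "w \<in> C" and z: "z \<in> C"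
    and dw: "vdist x w = dist_to x C" and dz: "vdist x z = dist_to x C"
  shows "w = z"
proof -
  have V: "w \<in> V" "z \<in> V"
    using C w z subtree_subset by auto
  obtain m where m: "m \<in> set (geodesic x w)" "m \<in> set (geodesic x z)" "m \<in> set (geodesic w z)"
    using geodesic_median[OF x V] .
  have "m \<in> C"
    using C w z m(3) unfolding subtree_def by blast
  then have "dist_to x C \<le> vdist x m"
    by (rule dist_to_le)
  then have "m = w" "m = z"
    using dw dz vdist_along_geodesic[OF x V(1) m(1)] vdist_along_geodesic[OF x V(2) m(2)]
    by auto
  then show ?thesis by simp
qed

lemma helly_subtrees_bounded:
  assumes subtrees: "\<forall>A\<in>\<C>. subtree A" and meet: "\<forall>A\<in>\<C>. \<forall>B\<in>\<C>. A \<inter> B \<noteq> {}"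
    and \<C>\<^sub>0: "finite \<C>\<^sub>0" "\<C>\<^sub>0 \<subseteq> \<C>"
    and bounded: "\<forall>x\<in>V \<inter> \<Inter>\<C>\<^sub>0. \<forall>y\<in>V \<inter> \<Inter>\<C>\<^sub>0. vdist x y < R"
  shows "V \<inter> \<Inter>\<C> \<noteq> {}"
proof -
  define admissible where "admissible \<F> \<longleftrightarrow> finite \<F> \<and> \<C>\<^sub>0 \<subseteq> \<F> \<and> \<F> \<subseteq> \<C>" for \<F>
  have nonempty: "V \<inter> \<Inter>\<F> \<noteq> {}" if "admissible \<F>" for \<F>
    using helly_subtrees that subtrees meet unfolding admissible_def by (meson subsetD)
  obtain x\<^sub>0 where x\<^sub>0: "x\<^sub>0 \<in> V \<inter> \<Inter>\<C>\<^sub>0"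
    using nonempty[of \<C>\<^sub>0] \<C>\<^sub>0 unfolding admissible_def by blast
  define depth where "depth \<F> = dist_to x\<^sub>0 (V \<inter> \<Inter>\<F>)" for \<F>
  have nearest: "\<exists>w \<in> V \<inter> \<Inter>\<F>. vdist x\<^sub>0 w = depth \<F>" if "admissible \<F>" for \<F>
    unfolding depth_def using nonempty[OF that] by (rule dist_to_attained)
  have "depth \<F> < R" if \<F>: "admissible \<F>" for \<F>
  proof -
    obtain w where w: "w \<in> V \<inter> \<Inter>\<F>" "vdist x\<^sub>0 w = depth \<F>"
      using nearest[OF \<F>] by blast
    moreover have "\<Inter>\<F> \<subseteq> \<Inter>\<C>\<^sub>0"
      using \<F> unfolding admissible_def by blast
    ultimately have "w \<in> V \<inter> \<Inter>\<C>\<^sub>0"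
      by blast
    then show ?thesis
      using bounded x\<^sub>0 w(2) by metis
  qed
  moreover have "admissible \<C>\<^sub>0"
    using \<C>\<^sub>0 unfolding admissible_def by blast
  ultimately obtain \<F> where \<F>: "admissible \<F>"
    and deepest: "\<And>\<F>'. admissible \<F>' \<Longrightarrow> depth \<F>' \<le> depth \<F>"
    using ex_has_greatest_nat[of admissible \<C>\<^sub>0 depth R] by blast
  obtain z where z: "z \<in> V \<inter> \<Inter>\<F>" "vdist x\<^sub>0 z = depth \<F>"
    using nearest[OF \<F>] by blast
  have subtree_\<F>: "subtree (V \<inter> \<Inter>\<F>)"
    using subtree_Inter subtrees \<F> unfolding admissible_def by blast
  have "z \<in> A" if "A \<in> \<C>" for A
  proof -
    have A\<F>: "admissible (insert A \<F>)"
      using \<F> that unfolding admissible_def by blast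
    then obtain w where w: "w \<in> V \<inter> \<Inter>(insert A \<F>)" "vdist x\<^sub>0 w = depth (insert A \<F>)"
      using nearest by blast
    then have w_\<F>: "w \<in> V \<inter> \<Inter>\<F>"
      by blast
    then have "depth \<F> \<le> vdist x\<^sub>0 w"
      unfolding depth_def by (rule dist_to_le)
    with w(2) deepest[OF A\<F>] have "vdist x\<^sub>0 w = depth \<F>"
      by linarith
    then have "w = z"
      using nearest_point_unique[OF subtree_\<F> _ w_\<F> z(1)] x\<^sub>0 z(2) unfolding depth_def by blast
    then show ?thesis
      using w(1) by blast
  qed
  then show ?thesis
    using z(1) by blast
qed

end

section \<open>Groups acting on trees\<close>

locale tree_group_action = tree_graph V E + group_action G V \<phi>
  for G :: "('g, 'b) monoid_scheme" and V :: "'v set" and E and \<phi> +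
  assumes adjacent_image: "g \<in> carrier G \<Longrightarrow> E x y \<Longrightarrow> E (\<phi> g x) (\<phi> g y)"

lemma tree_action_imp_tree_group_action:
  assumes "tree_action G V E \<phi>"
  shows "tree_group_action G V E \<phi>"
proof -
  have "simplicial_tree V E" "group_action G V \<phi>"
    and "\<forall>g\<in>carrier G. \<forall>x\<in>V. \<forall>y\<in>V. E (\<phi> g x) (\<phi> g y) \<longleftrightarrow> E x y"
    using assms unfolding tree_action_def by auto
  moreover have "E x y \<Longrightarrow> x \<in> V \<and> y \<in> V" for x y
    using \<open>simplicial_tree V E\<close> unfolding simplicial_tree_def by blast
  ultimately show ?thesis
    unfolding tree_group_action_def tree_group_action_axioms_def tree_graph_def by blast
qed

context tree_group_action
begin

lemma group_G: "group G"
  using group_hom group_hom.axioms(1) by blast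

lemma is_path_image:
  assumes g: "g \<in> carrier G" and p: "is_path x y p"
  shows "is_path (\<phi> g x) (\<phi> g y) (map (\<phi> g) p)"
proof -
  have "set p \<subseteq> V"
    using p unfolding is_path_def by blast
  then show ?thesis
    using p inj_prop[OF g] element_image[OF g] adjacent_image[OF g]
    unfolding is_path_def
    by (auto simp: successively_map hd_map last_map distinct_map inj_on_subset
        elim: successively_mono)
qed

lemma geodesic_image:
  assumes "g \<in> carrier G" "x \<in> V" "y \<in> V"
  shows "geodesic (\<phi> g x) (\<phi> g y) = map (\<phi> g) (geodesic x y)"
  using is_path_image[OF assms(1) is_path_geodesic[OF assms(2,3)]] by (rule geodesic_eqI)

definition fixed_points :: "'g set \<Rightarrow> 'v set" where
  "fixed_points H = {v \<in> V. \<forall>h\<in>H. \<phi> h v = v}"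

lemma fixed_points_antimono: "H \<subseteq> K \<Longrightarrow> fixed_points K \<subseteq> fixed_points H"
  unfolding fixed_points_def by blast

lemma fixed_points_eq_Inter: "fixed_points H = V \<inter> (\<Inter>h\<in>H. fixed_points {h})"
  unfolding fixed_points_def by blast

lemma subtree_fixed_points:
  assumes "H \<subseteq> carrier G"
  shows "subtree (fixed_points H)"
  unfolding subtree_def
proof (intro conjI ballI subsetI)
  fix x y v
  assume x: "x \<in> fixed_points H" and y: "y \<in> fixed_points H" and v: "v \<in> set (geodesic x y)"
  have "x \<in> V" "y \<in> V"
    using x y unfolding fixed_points_def by auto
  then have "v \<in> V"
    using v set_geodesic_subset by blast
  moreover have "\<phi> h v = v" if "h \<in> H" for h
  proof -
    have "map (\<phi> h) (geodesic x y) = geodesic x y"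
      using geodesic_image[of h x y] assms that x y unfolding fixed_points_def by auto
    then show ?thesis
      using v by (metis map_eq_conv map_ident)
  qed
  ultimately show "v \<in> fixed_points H"
    unfolding fixed_points_def by blast
qed (auto simp: fixed_points_def)

text \<open>c is the midpoint of [x, g x]: since [p, g x] is the g-image of [p, x], the two geodesics
  branch at a g-fixed vertex c, and [x, g x] passes through c symmetrically.\<close>

lemma geodesic_to_image_of_elliptic:
  assumes g: "g \<in> carrier G" and p: "p \<in> V" "\<phi> g p = p" and x: "x \<in> V"
  obtains r c where "geodesic x (\<phi> g x) = rev r @ c # map (\<phi> g) r" "\<phi> g c = c"
proof -
  have gx: "\<phi> g x \<in> V"
    using element_image g x by blast
  obtain q r s where px: "geodesic p x = q @ r" and pgx: "geodesic p (\<phi> g x) = q @ s"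
    and "q \<noteq> []" and tripod: "geodesic x (\<phi> g x) = rev r @ last q # s"
    using geodesic_tripod[OF p(1) x gx] .
  have "q @ s = map (\<phi> g) q @ map (\<phi> g) r"
    using geodesic_image[OF g p(1) x] p(2) px pgx by simp
  then have "map (\<phi> g) q = q" and "s = map (\<phi> g) r"
    by (auto simp: append_eq_append_conv)
  moreover from this have "\<phi> g (last q) = last q"
    using \<open>q \<noteq> []\<close> by (metis last_map)
  ultimately show thesis
    using that tripod by simp
qed

text \<open>Serre's lemma. With y = b x for a fixed point x of a b, the midpoint of [x, y] is fixed by b, and,
  since a y = x, it is also the midpoint of [y, a y], hence fixed by a.\<close>

lemma common_fixed_point:
  assumes a: "a \<in> carrier G" and b: "b \<in> carrier G"
    and "fixed_points {a} \<noteq> {}" "fixed_points {b} \<noteq> {}" "fixed_points {a \<otimes>\<^bsub>G\<^esub> b} \<noteq> {}"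
  shows "fixed_points {a} \<inter> fixed_points {b} \<noteq> {}"
proof -
  obtain p\<^sub>a p\<^sub>b x where p\<^sub>a: "p\<^sub>a \<in> V" "\<phi> a p\<^sub>a = p\<^sub>a" and p\<^sub>b: "p\<^sub>b \<in> V" "\<phi> b p\<^sub>b = p\<^sub>b"
    and x: "x \<in> V" "\<phi> (a \<otimes>\<^bsub>G\<^esub> b) x = x"
    using assms(3-5) unfolding fixed_points_def by auto
  define y where "y = \<phi> b x"
  have y: "y \<in> V"
    using element_image b x(1) y_def by blast
  have ay: "\<phi> a y = x"
    using composition_rule[OF x(1) a b] x(2) y_def by simp
  obtain r c where geo_xy: "geodesic x y = rev r @ c # map (\<phi> b) r" and c: "\<phi> b c = c"
    using geodesic_to_image_of_elliptic[OF b p\<^sub>b x(1)] y_def by metis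
  obtain r' c' where geo_yx: "geodesic y x = rev r' @ c' # map (\<phi> a) r'" and c': "\<phi> a c' = c'"
    using geodesic_to_image_of_elliptic[OF a p\<^sub>a y] ay by metis
  have "rev r' @ c' # map (\<phi> a) r' = rev (map (\<phi> b) r) @ c # r"
    using geodesic_rev[OF x(1) y] geo_xy geo_yx by simp
  moreover from arg_cong[OF this, of length] have "length r' = length r"
    by simp
  ultimately have "c' = c"
    by (simp add: append_eq_append_conv)
  then have "c \<in> fixed_points {a} \<inter> fixed_points {b}"
    using c c' geo_xy set_geodesic_subset[OF x(1) y] unfolding fixed_points_def by auto
  then show ?thesis by blast
qed

lemma fixed_points_generate:
  assumes "S \<subseteq> carrier G"
  shows "fixed_points (generate G S) = fixed_points S"
proof
  show "fixed_points (generate G S) \<subseteq> fixed_points S"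
    by (rule fixed_points_antimono) (auto intro: generate.incl)
next
  show "fixed_points S \<subseteq> fixed_points (generate G S)"
  proof
    fix v assume v: "v \<in> fixed_points S"
    then have "S \<subseteq> stabilizer G \<phi> v" "v \<in> V"
      using assms unfolding fixed_points_def stabilizer_def by auto
    then have "generate G S \<subseteq> stabilizer G \<phi> v"
      using group.generate_subgroup_incl[OF group_G] stabilizer_subgroup by blast
    then show "v \<in> fixed_points (generate G S)"
      using \<open>v \<in> V\<close> unfolding fixed_points_def stabilizer_def by blast
  qed
qed

lemma elliptic_subgroup_iff: "elliptic_subgroup V \<phi> H \<longleftrightarrow> fixed_points H \<noteq> {}"
  unfolding elliptic_subgroup_def fixed_points_def by blast

lemma elliptic_element_iff:
  "g \<in> carrier G \<Longrightarrow> elliptic_element G V \<phi> g \<longleftrightarrow> fixed_points {g} \<noteq> {}"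
  unfolding elliptic_element_def elliptic_subgroup_iff
  using fixed_points_generate[of "{g}"] by simp

lemma acylindrical_fixed_points_bounded:
  assumes "acylindrical_action G V (tree_dist V E) \<phi>"
  obtains R N where
    "\<And>F x y. F \<subseteq> carrier G \<Longrightarrow> card F > N \<Longrightarrow> x \<in> fixed_points F \<Longrightarrow> y \<in> fixed_points F
      \<Longrightarrow> vdist x y < R"
proof -
  obtain R N where RN: "\<forall>x\<in>V. \<forall>y\<in>V. tree_dist V E x y \<ge> R \<longrightarrow>
      finite {g \<in> carrier G. tree_dist V E x (\<phi> g x) \<le> 0 \<and> tree_dist V E y (\<phi> g y) \<le> 0} \<and>
      card {g \<in> carrier G. tree_dist V E x (\<phi> g x) \<le> 0 \<and> tree_dist V E y (\<phi> g y) \<le> 0} \<le> N"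
    using assms[unfolded acylindrical_action_def, rule_format, of 0, OF order_refl] by blast
  have "vdist x y < nat \<lceil>R\<rceil>"
    if F: "F \<subseteq> carrier G" "card F > N" and xy: "x \<in> fixed_points F" "y \<in> fixed_points F"
    for F x y
  proof (rule ccontr)
    assume "\<not> vdist x y < nat \<lceil>R\<rceil>"
    moreover have V: "x \<in> V" "y \<in> V"
      using xy unfolding fixed_points_def by auto
    ultimately have "tree_dist V E x y \<ge> R"
      using tree_dist_eq_vdist by (simp add: not_less nat_ceiling_le_eq)
    moreover have "F \<subseteq> {g \<in> carrier G. tree_dist V E x (\<phi> g x) \<le> 0 \<and> tree_dist V E y (\<phi> g y) \<le> 0}"
      using F xy V tree_dist_eq_vdist vdist_refl unfolding fixed_points_def by auto
    ultimately have "card F \<le> N"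
      using RN V by (meson card_mono order_trans)
    then show False
      using F(2) by simp
  qed
  then show thesis
    using that by blast
qed

lemma fixed_points_nonempty_if_pairwise_meet:
  assumes acylindrical: "acylindrical_action G V (tree_dist V E) \<phi>" and S: "S \<subseteq> carrier G"
    and meet: "\<forall>s\<in>S. \<forall>t\<in>S. fixed_points {s} \<inter> fixed_points {t} \<noteq> {}"
  shows "fixed_points S \<noteq> {}"
proof -
  define \<C> where "\<C> = (\<lambda>s. fixed_points {s}) ` S"
  have subtrees: "\<forall>A\<in>\<C>. subtree A"
    using subtree_fixed_points S unfolding \<C>_def by auto
  have meet_\<C>: "\<forall>A\<in>\<C>. \<forall>B\<in>\<C>. A \<inter> B \<noteq> {}"
    using meet unfolding \<C>_def by blast
  have "V \<inter> \<Inter>\<C> \<noteq> {}"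
  proof (cases "finite S")
    case True
    then have "finite \<C>"
      unfolding \<C>_def by simp
    then show ?thesis
      using subtrees meet_\<C> by (rule helly_subtrees)
  next
    case False
    obtain R N where bounded: "\<And>F x y. F \<subseteq> carrier G \<Longrightarrow> card F > N \<Longrightarrow>
        x \<in> fixed_points F \<Longrightarrow> y \<in> fixed_points F \<Longrightarrow> vdist x y < R"
      using acylindrical_fixed_points_bounded[OF acylindrical] by metis
    obtain F where F: "finite F" "card F = Suc N" "F \<subseteq> S"
      using infinite_arbitrarily_large[OF False] by blast
    show ?thesis
    proof (rule helly_subtrees_bounded[OF subtrees meet_\<C>])
      show "finite ((\<lambda>s. fixed_points {s}) ` F)" "(\<lambda>s. fixed_points {s}) ` F \<subseteq> \<C>"
        using F unfolding \<C>_def by auto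
      have "F \<subseteq> carrier G" "card F > N"
        using F S by auto
      then show "\<forall>x\<in>V \<inter> \<Inter>((\<lambda>s. fixed_points {s}) ` F).
          \<forall>y\<in>V \<inter> \<Inter>((\<lambda>s. fixed_points {s}) ` F). vdist x y < R"
        unfolding fixed_points_eq_Inter[symmetric] using bounded by blast
    qed
  qed
  then show ?thesis
    unfolding \<C>_def fixed_points_eq_Inter[of S] .
qed

end

theorem corollary2p14:
  fixes G :: "('g, 'b) monoid_scheme" and S :: "'g set"
    and V :: "'v set" and E :: "'v \<Rightarrow> 'v \<Rightarrow> bool" and \<phi> :: "'g \<Rightarrow> 'v \<Rightarrow> 'v"
  assumes "group G"
    and "countable (carrier G)"
    and "S \<subseteq> carrier G"
    and "generate G S = carrier G"
    and "tree_action G V E \<phi>"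
    and "acylindrical_action G V (tree_dist V E) \<phi>"
    and "\<forall>s\<in>S. elliptic_element G V \<phi> s"
    and "\<forall>s\<in>S. \<forall>t\<in>S. s \<noteq> t \<longrightarrow> elliptic_element G V \<phi> (s \<otimes>\<^bsub>G\<^esub> t)"
  shows "elliptic_subgroup V \<phi> (carrier G)"
proof -
  interpret tree_group_action G V E \<phi>
    using assms(5) by (rule tree_action_imp_tree_group_action)
  have elliptic: "fixed_points {s} \<noteq> {}" if "s \<in> S" for s
    using assms(3,7) that elliptic_element_iff by blast
  have "fixed_points {s} \<inter> fixed_points {t} \<noteq> {}" if st: "s \<in> S" "t \<in> S" "s \<noteq> t" for s t
  proof (rule common_fixed_point)
    have "s \<otimes>\<^bsub>G\<^esub> t \<in> carrier G"
      using st assms(1,3) by (meson group.is_monoid monoid.m_closed subsetD)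
    then show "fixed_points {s \<otimes>\<^bsub>G\<^esub> t} \<noteq> {}"
      using assms(8) st elliptic_element_iff by blast
  qed (use st assms(3) elliptic in auto)
  then have "fixed_points S \<noteq> {}"
    using fixed_points_nonempty_if_pairwise_meet[OF assms(6,3)] elliptic by (metis Int_absorb)
  then show ?thesis
    unfolding elliptic_subgroup_iff assms(4)[symmetric] fixed_points_generate[OF assms(3)] .
qed

end
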